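(* Fix a state-action pair $(s,a)$. Let $\nu(\cdot\mid s,a)$ be a probability distribution on $\mathbb{R}$ with finite second moment and quantile function $F_\nu^{-1}(\cdot\mid s,a)$. Let $g:[0,1]\to\mathbb{R}$ be a source map (the identity or an affine map), and let $v_\theta(t,z\mid s,a,\tau)$ be a scalar velocity field, $t\in[0,1]$, $z\in\mathbb{R}$, $\tau\in[0,1]$. For each $\tau\in[0,1]$ let $t\mapsto z_t^\theta$ be the solution of $\frac{d}{dt}z_t^\theta=v_\theta(t,z_t^\theta\mid s,a,\tau)$ with $z_0^\theta=g(\tau)$, and set $$T_\theta(\tau\mid s,a)=z_1^\theta=g(\tau)+\int_0^1 v_\theta(t,z_t^\theta\mid s,a,\tau)\,dt .$$ Assume $\tau\mapsto T_\theta(\tau\mid s,a)$ is nondecreasing (so that it is the quantile function of $\eta_\theta(\cdot\mid s,a):=(T_\theta(\cdot\mid s,a))_\#\mathrm{Unif}[0,1]$), and that all quantities below are square integrable. Define $u^\star(\tau\mid s,a)=F_\nu^{-1}(\tau\mid s,a)-g(\tau)$ and the (population, monotone-coupled) FlowIQN loss $$\mathcal{L}_{\mathrm{FlowIQN}}(\theta;s,a)=\mathbb{E}_{\tau\sim\mathrm{Unif}[0,1],\,t\sim\mathrm{Unif}[0,1]}\Big[\big|v_\theta(t,z_t^\theta\mid s,a,\tau)-u^\star(\tau\mid s,a)\big|^2\Big].$$ Then $$W_2^2\big(\eta_\theta(\cdot\mid s,a),\nu(\cdot\mid s,a)\big)\le \mathcal{L}_{\mathrm{FlowIQN}}(\t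heta;s,a).$$
   Context: $W_2$ denotes the 2-Wasserstein distance on probability measures on $\mathbb{R}$ with finite second moments; in one dimension $W_2^2(\mu,\nu)=\int_0^1|F_\mu^{-1}(\tau)-F_\nu^{-1}(\tau)|^2\,d\tau$, where $F^{-1}$ are quantile functions. Here $\nu(\cdot\mid s,a)$ plays the role of the Bellman target return distribution at $(s,a)$, and $\eta_\theta(\cdot\mid s,a)$ the return distribution induced by the flow critic. The monotone (quantile) coupling pairs source quantile level $\tau$ with target quantile $F_\nu^{-1}(\tau\mid s,a)$, along the straight path $(1-t)g(\tau)+tF_\nu^{-1}(\tau\mid s,a)$ whose constant velocity is $u^\star$. *)

theory Defs
  imports "HOL-Probability.Probability"
begin

definition unif01 :: "real measure" where
  "unif01 = uniform_measure lborel {0..1}"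

text \<open>Quantile function (generalized inverse of the CDF), used for levels in (0,1).\<close>
definition quantile :: "real measure \<Rightarrow> real \<Rightarrow> real" where
  "quantile \<mu> \<tau> = Inf {x. \<tau> \<le> cdf \<mu> x}"

text \<open>Squared 2-Wasserstein distance on the real line via the quantile formula.\<close>
definition W2sq :: "real measure \<Rightarrow> real measure \<Rightarrow> ennreal" where
  "W2sq \<mu> \<nu> = (\<integral>\<^sup>+ \<tau>. ennreal ((quantile \<mu> \<tau> - quantile \<nu> \<tau>)\<^sup>2) * indicator {0<..<1} \<tau> \<partial>lborel)"

end

theory Submission
  imports Defs
begin

(* For each level tau, the endpoint of the flow is T tau = g tau + integral_0^1 v dt, so
   T tau - F_nu^-1 tau = integral_0^1 (v - u_star) dt, whose square is at most
   integral_0^1 (v - u_star)^2 dt by Jensen.  As T is monotone, it agrees with the quantile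
   function of its pushforward of Unif[0,1] at every continuity point, hence almost everywhere,
   so integrating over tau turns the left side into W_2^2 and, by Tonelli, the right side into
   the loss. *)

lemma prob_space_unif01: "prob_space unif01"
  unfolding unif01_def by (rule prob_space_uniform_measure) auto

lemma sets_unif01 [simp]: "sets unif01 = sets borel"
  unfolding unif01_def by simp

lemma space_unif01 [simp]: "space unif01 = UNIV"
  unfolding unif01_def by simp

lemma measurable_unif01 [simp]: "measurable unif01 N = measurable borel N"
  by (rule measurable_cong_sets) simp_all

lemma nn_integral_unif01:
  assumes [measurable]: "f \<in> borel_measurable borel"
  shows "(\<integral>\<^sup>+x. f x \<partial>unif01) = (\<integral>\<^sup>+x. f x * indicator {0..1} x \<partial>lborel)"
  unfolding unif01_def
  by (subst nn_integral_uniform_measure) (auto simp: divide_ennreal_def)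

lemma cdf_distr_unif01:
  assumes [measurable]: "T \<in> borel_measurable borel"
  shows "cdf (distr unif01 borel T) x = measure lborel {\<sigma>\<in>{0..1}. T \<sigma> \<le> x}"
proof -
  have "cdf (distr unif01 borel T) x = measure unif01 (T -` {..x})"
    unfolding cdf_def by (subst measure_distr) simp_all
  also have "\<dots> = measure lborel ({0..1} \<inter> T -` {..x})"
    unfolding unif01_def using measurable_sets[OF assms, of "{..x}"]
    by (subst measure_uniform_measure) auto
  finally show ?thesis
    by (simp add: Int_def vimage_def conj_commute)
qed

lemma le_cdf_distr_unif01:
  fixes T :: "real \<Rightarrow> real"
  assumes mono: "mono_on {0..1} T" and [measurable]: "T \<in> borel_measurable borel"
    and \<tau>: "\<tau> \<in> {0..1}"
  shows "\<tau> \<le> cdf (distr unif01 borel T) (T \<tau>)"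
proof -
  have "{0..\<tau>} \<subseteq> {\<sigma>\<in>{0..1}. T \<sigma> \<le> T \<tau>}"
    using \<tau> by (auto intro: mono_onD[OF mono])
  moreover have "{\<sigma>\<in>{0..1}. T \<sigma> \<le> T \<tau>} \<in> fmeasurable lborel"
    by (rule fmeasurableI2[of "{0..1}"]) (auto simp: fmeasurable_def)
  ultimately have "measure lborel {0..\<tau>} \<le> measure lborel {\<sigma>\<in>{0..1}. T \<sigma> \<le> T \<tau>}"
    by (intro measure_mono_fmeasurable) auto
  then show ?thesis
    using \<tau> by (simp add: cdf_distr_unif01)
qed

lemma cdf_distr_unif01_less:
  fixes T :: "real \<Rightarrow> real"
  assumes mono: "mono_on {0..1} T" and [measurable]: "T \<in> borel_measurable borel"
    and \<tau>: "\<tau> \<in> {0<..<1}" and cont: "isCont T \<tau>" and x: "x < T \<tau>"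
  shows "cdf (distr unif01 borel T) x < \<tau>"
proof -
  obtain \<delta> where \<delta>: "\<delta> > 0" "\<And>\<sigma>. dist \<sigma> \<tau> < \<delta> \<Longrightarrow> dist (T \<sigma>) (T \<tau>) < T \<tau> - x"
    using cont x unfolding continuous_at_eps_delta by (metis diff_gt_0_iff_gt)
  define \<epsilon> where "\<epsilon> = min (\<delta>/2) \<tau>"
  have \<epsilon>: "0 < \<epsilon>" "\<epsilon> \<le> \<tau>" "\<epsilon> < \<delta>"
    using \<delta> \<tau> by (auto simp: \<epsilon>_def)
  have "\<sigma> \<le> \<tau> - \<epsilon>" if \<sigma>: "\<sigma> \<in> {0..1}" "T \<sigma> \<le> x" for \<sigma>
  proof (rule ccontr)
    assume far: "\<not> \<sigma> \<le> \<tau> - \<epsilon>"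
    show False
    proof (cases "\<tau> \<le> \<sigma>")
      case True
      then have "T \<tau> \<le> T \<sigma>" using \<sigma> \<tau> by (auto intro: mono_onD[OF mono])
      then show False using \<sigma> x by linarith
    next
      case False
      then have "dist \<sigma> \<tau> < \<delta>" using far \<epsilon> by (auto simp: dist_real_def)
      then show False using \<delta>(2) \<sigma> by (fastforce simp: dist_real_def)
    qed
  qed
  then have "{\<sigma>\<in>{0..1}. T \<sigma> \<le> x} \<subseteq> {0..\<tau> - \<epsilon>}" by auto
  then have "measure lborel {\<sigma>\<in>{0..1}. T \<sigma> \<le> x} \<le> measure lborel {0..\<tau> - \<epsilon>}"
    using \<epsilon> by (intro measure_mono_fmeasurable) (auto simp: fmeasurable_def)
  then show ?thesis
    using \<epsilon> by (simp add: cdf_distr_unif01)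
qed

lemma quantile_distr_unif01:
  fixes T :: "real \<Rightarrow> real"
  assumes "mono_on {0..1} T" and "T \<in> borel_measurable borel"
    and "\<tau> \<in> {0<..<1}" and "isCont T \<tau>"
  shows "quantile (distr unif01 borel T) \<tau> = T \<tau>"
  unfolding quantile_def
proof (rule cInf_eq_minimum)
  show "T \<tau> \<in> {x. \<tau> \<le> cdf (distr unif01 borel T) x}"
    using le_cdf_distr_unif01[OF assms(1,2)] assms(3) by simp
  show "T \<tau> \<le> x" if "x \<in> {x. \<tau> \<le> cdf (distr unif01 borel T) x}" for x
    using that cdf_distr_unif01_less[OF assms] by (meson mem_Collect_eq not_le)
qed

lemma AE_quantile_distr_unif01:
  fixes T :: "real \<Rightarrow> real"
  assumes mono: "mono_on {0..1} T" and [measurable]: "T \<in> borel_measurable borel"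
  shows "AE \<tau> in lborel. \<tau> \<in> {0<..<1} \<longrightarrow> quantile (distr unif01 borel T) \<tau> = T \<tau>"
proof (rule AE_I')
  have "mono_on {0<..<1} T" using mono by (rule mono_on_subset) auto
  then show "{\<tau>\<in>{0<..<1}. \<not> isCont T \<tau>} \<in> null_sets lborel"
    by (intro countable_imp_null_set_lborel mono_on_ctble_discont_open) auto
  show "{\<tau> \<in> space lborel. \<not> (\<tau> \<in> {0<..<1} \<longrightarrow> quantile (distr unif01 borel T) \<tau> = T \<tau>)}
      \<subseteq> {\<tau>\<in>{0<..<1}. \<not> isCont T \<tau>}"
    using quantile_distr_unif01[OF assms] by auto
qed

lemma W2sq_distr_unif01:
  fixes T :: "real \<Rightarrow> real"
  assumes "mono_on {0..1} T" and "T \<in> borel_measurable borel"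
  shows "W2sq (distr unif01 borel T) \<nu>
    = (\<integral>\<^sup>+\<tau>. ennreal ((T \<tau> - quantile \<nu> \<tau>)\<^sup>2) * indicator {0<..<1} \<tau> \<partial>lborel)"
  unfolding W2sq_def
  using AE_quantile_distr_unif01[OF assms]
  by (intro nn_integral_cong_AE) (auto elim!: eventually_mono simp: indicator_def)

lemma square_of_integral_le:
  fixes f :: "real \<Rightarrow> real"
  assumes "a < b" and f: "(f has_integral c) {a..b}"
    and f2: "((\<lambda>t. (f t)\<^sup>2) has_integral r) {a..b}"
  shows "c\<^sup>2 \<le> (b - a) * r"
proof -
  have "((\<lambda>t. (b - a)\<^sup>2 * (f t)\<^sup>2 - 2 * (b - a) * c * f t + c\<^sup>2)
      has_integral ((b - a)\<^sup>2 * r - 2 * (b - a) * c * c + c\<^sup>2 * (b - a))) {a..b}"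
    using has_integral_const_real[of "c\<^sup>2" a b] \<open>a < b\<close>
    by (intro has_integral_add has_integral_diff has_integral_mult_right f f2)
      (simp add: mult.commute)
  then have "((\<lambda>t. ((b - a) * f t - c)\<^sup>2) has_integral (b - a) * ((b - a) * r - c\<^sup>2)) {a..b}"
    by (simp add: power2_diff power_mult_distrib algebra_simps power2_eq_square)
  then have "0 \<le> (b - a) * ((b - a) * r - c\<^sup>2)"
    by (rule has_integral_nonneg) simp
  then show ?thesis
    using \<open>a < b\<close> by (simp add: zero_le_mult_iff)
qed

lemma square_of_integral_le_nn_integral_unif01:
  fixes f :: "real \<Rightarrow> real"
  assumes f: "(f has_integral c) {0..1}"
    and [measurable]: "(\<lambda>t. (f t)\<^sup>2) \<in> borel_measurable borel"
  shows "ennreal (c\<^sup>2) \<le> (\<integral>\<^sup>+t. ennreal ((f t)\<^sup>2) \<partial>unif01)"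
proof (cases "(\<integral>\<^sup>+t. ennreal ((f t)\<^sup>2) \<partial>unif01) = \<infinity>")
  case False
  then obtain r where r: "(\<integral>\<^sup>+t. ennreal ((f t)\<^sup>2) \<partial>unif01) = ennreal r" "0 \<le> r"
    by (cases "\<integral>\<^sup>+t. ennreal ((f t)\<^sup>2) \<partial>unif01") auto
  have restrict: "(\<lambda>t. indicator {0..1} t * (f t)\<^sup>2) = (\<lambda>t. if t \<in> {0..1} then (f t)\<^sup>2 else 0)"
    by (auto simp: indicator_def)
  have "(\<integral>\<^sup>+t. ennreal (indicator {0..1} t * (f t)\<^sup>2) \<partial>lborel) = ennreal r"
    using r(1) by (simp add: nn_integral_unif01 ennreal_mult' ennreal_indicator mult.commute)
  then have "((\<lambda>t. indicator {0..1} t * (f t)\<^sup>2) has_integral r) UNIV"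
    by (intro nn_integral_has_integral r(2)) auto
  then have "((\<lambda>t. (f t)\<^sup>2) has_integral r) {0..1}"
    by (simp only: restrict has_integral_restrict_UNIV)
  then have "c\<^sup>2 \<le> r"
    using square_of_integral_le[OF _ f] by simp
  then show ?thesis using r by simp
qed simp

lemma square_displacement_le_nn_integral_unif01:
  fixes x x' :: "real \<Rightarrow> real"
  assumes "\<forall>t\<in>{0..1}. (x has_vector_derivative x' t) (at t within {0..1})"
    and "(\<lambda>t. (x' t - c)\<^sup>2) \<in> borel_measurable borel"
  shows "ennreal ((x 1 - x 0 - c)\<^sup>2) \<le> (\<integral>\<^sup>+t. ennreal ((x' t - c)\<^sup>2) \<partial>unif01)"
proof (rule square_of_integral_le_nn_integral_unif01)
  have "(x' has_integral (x 1 - x 0)) {0..1}"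
    using assms(1) by (intro fundamental_theorem_of_calculus) auto
  then show "((\<lambda>t. x' t - c) has_integral (x 1 - x 0 - c)) {0..1}"
    using has_integral_diff[OF _ has_integral_const_real[of c 0 1]] by simp
qed fact

theorem proposition1:
  fixes \<nu> :: "real measure"
    and g :: "real \<Rightarrow> real"
    and v :: "real \<Rightarrow> real \<Rightarrow> real \<Rightarrow> real"
    and z :: "real \<Rightarrow> real \<Rightarrow> real"
  assumes nu_prob: "prob_space \<nu>"
    and nu_sets: "sets \<nu> = sets borel"
    and nu_moment: "integrable \<nu> (\<lambda>x. x\<^sup>2)"
    and g_affine: "\<exists>\<alpha> \<beta>. \<forall>\<tau>. g \<tau> = \<alpha> * \<tau> + \<beta>"
    and ode: "\<And>\<tau>. \<tau> \<in> {0..1} \<Longrightarrow> z \<tau> 0 = g \<tau> \<and>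
              (\<forall>t\<in>{0..1}. (z \<tau> has_vector_derivative v t (z \<tau> t) \<tau>) (at t within {0..1}))"
    and T_mono: "mono_on {0..1} (\<lambda>\<tau>. z \<tau> 1)"
    and T_meas: "(\<lambda>\<tau>. z \<tau> 1) \<in> borel_measurable borel"
    and T_sq: "integrable unif01 (\<lambda>\<tau>. (z \<tau> 1)\<^sup>2)"
    and v_meas: "(\<lambda>p. v (snd p) (z (fst p) (snd p)) (fst p)) \<in> borel_measurable (borel \<Otimes>\<^sub>M borel)"
    and loss_sq: "integrable (unif01 \<Otimes>\<^sub>M unif01)
       (\<lambda>p. (v (snd p) (z (fst p) (snd p)) (fst p) - (quantile \<nu> (fst p) - g (fst p)))\<^sup>2)"
  shows "W2sq (distr unif01 borel (\<lambda>\<tau>. z \<tau> 1)) \<nu>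
     \<le> (\<integral>\<^sup>+ p. ennreal ((v (snd p) (z (fst p) (snd p)) (fst p) - (quantile \<nu> (fst p) - g (fst p)))\<^sup>2)
          \<partial>(unif01 \<Otimes>\<^sub>M unif01))"
proof -
  interpret unif01: prob_space unif01 by (rule prob_space_unif01)
  define L where
    "L p = (v (snd p) (z (fst p) (snd p)) (fst p) - (quantile \<nu> (fst p) - g (fst p)))\<^sup>2" for p
  \<comment> \<open>Measurability is read off from \<open>loss_sq\<close>.\<close>
  have [measurable]: "L \<in> borel_measurable (unif01 \<Otimes>\<^sub>M unif01)"
    unfolding L_def[abs_def] using loss_sq by (rule borel_measurable_integrable)
  have pointwise: "ennreal ((z \<tau> 1 - quantile \<nu> \<tau>)\<^sup>2) \<le> (\<integral>\<^sup>+t. ennreal (L (\<tau>, t)) \<partial>unif01)"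
    if "\<tau> \<in> {0..1}" for \<tau>
    using square_displacement_le_nn_integral_unif01[of "z \<tau>" "\<lambda>t. v t (z \<tau> t) \<tau>" "quantile \<nu> \<tau> - g \<tau>"]
      ode[OF that] measurable_Pair2[of L unif01 unif01 borel \<tau>]
    by (simp add: L_def)
  have "W2sq (distr unif01 borel (\<lambda>\<tau>. z \<tau> 1)) \<nu>
      = (\<integral>\<^sup>+\<tau>. ennreal ((z \<tau> 1 - quantile \<nu> \<tau>)\<^sup>2) * indicator {0<..<1} \<tau> \<partial>lborel)"
    using T_mono T_meas by (rule W2sq_distr_unif01)
  also have "\<dots> \<le> (\<integral>\<^sup>+\<tau>. (\<integral>\<^sup>+t. ennreal (L (\<tau>, t)) \<partial>unif01) * indicator {0..1} \<tau> \<partial>lborel)"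
    using pointwise by (intro nn_integral_mono) (auto simp: indicator_def)
  also have "\<dots> = (\<integral>\<^sup>+\<tau>. \<integral>\<^sup>+t. ennreal (L (\<tau>, t)) \<partial>unif01 \<partial>unif01)"
    using unif01.borel_measurable_nn_integral_fst[of "\<lambda>p. ennreal (L p)" unif01]
    by (intro nn_integral_unif01[symmetric]) simp
  also have "\<dots> = (\<integral>\<^sup>+p. ennreal (L p) \<partial>(unif01 \<Otimes>\<^sub>M unif01))"
    by (rule unif01.nn_integral_fst) simp
  finally show ?thesis
    by (simp add: L_def)
qed

end
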